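(* Let $g:\mathbb{N}\to\mathbb{N}$ be monotone, strictly inflationary ($g(x)>x$ for all $x$) and super-homogeneous ($g(xy)\ge g(x)\cdot y$ for all $x,y\ge1$), and let $n\in\mathbb{N}$. If $\mathcal{Q}_0\subsetneq\mathcal{Q}_1\subsetneq\dots\subsetneq\mathcal{Q}_\ell$ is a $(g,n)$-controlled chain of congruences on $\mathbb{N}^d$, then $\ell\le 1+g^{\omega^{4d}}(4dn)$.
   Context: A congruence on $\mathbb{N}^d$ is an equivalence relation $\mathcal{Q}\subseteq\mathbb{N}^d\times\mathbb{N}^d$ with $(\mathbf{a},\mathbf{b})\in\mathcal{Q}\Rightarrow(\mathbf{a}+\mathbf{c},\mathbf{b}+\mathbf{c})\in\mathcal{Q}$, viewed as a subset of $\mathbb{N}^{2d}$. A chain $S_0\subsetneq S_1\subsetneq\dots\subsetneq S_\ell$ of subsets of $\mathbb{N}^k$ is $(g,n)$-controlled if for each $i\in[0,\ell-1]$ there is $\mathbf{s}_i\in S_{i+1}\setminus S_i$ with $\|\mathbf{s}_i\|\le g^i(n)$ ($\|\cdot\|$ maximum norm, $g^i$ the $i$-fold iterate). Hardy hierarchy relative to $g$: $g^0(x)=x$, $g^{\alpha+1}(x)=g^\alpha(g(x))$, $g^\lambda(x)=g^{\lambda(x)}(x)$ for limit $\lambda\le\omega^\omega$, using the fundamental sequences $\omega^\omega(x)=\omega^{x+1}$ and $(\beta+\omega^{k+1})(x)=\beta+\omega^k\cdot(x+1)$ where $\beta+\omega^{k+1}$ is in Cantor normal form. *)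

theory Defs
  imports Main "HOL-Library.Multiset_Order"
begin

definition vecs :: "nat \<Rightarrow> nat list set" where
  "vecs d = {v. length v = d}"

definition vadd :: "nat list \<Rightarrow> nat list \<Rightarrow> nat list" where
  "vadd a b = map2 (+) a b"

definition vnorm :: "nat list \<Rightarrow> nat" where
  "vnorm v = foldr max v 0"

definition pnorm :: "nat list \<times> nat list \<Rightarrow> nat" where
  "pnorm p = vnorm (fst p @ snd p)"

definition congruence :: "nat \<Rightarrow> (nat list \<times> nat list) set \<Rightarrow> bool" where
  "congruence d Q \<longleftrightarrow> equiv (vecs d) Q \<and>
     (\<forall>a b c. (a, b) \<in> Q \<longrightarrow> c \<in> vecs d \<longrightarrow> (vadd a c, vadd b c) \<in> Q)"

definition controlled_chain ::
  "(nat \<Rightarrow> nat) \<Rightarrow> nat \<Rightarrow> ('a \<Rightarrow> nat) \<Rightarrow> (nat \<Rightarrow> 'a set) \<Rightarrow> nat \<Rightarrow> bool" where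
  "controlled_chain g n nrm S l \<longleftrightarrow>
     (\<forall>i<l. S i \<subset> S (Suc i)) \<and>
     (\<forall>i<l. \<exists>s \<in> S (Suc i) - S i. nrm s \<le> (g ^^ i) n)"

text \<open>Ordinals below \<open>\<omega>\<^sup>\<omega>\<close> in Cantor normal form
  \<open>\<omega>^e_n + ... + \<omega>^e_1\<close> (with \<open>e_n \<ge> ... \<ge> e_1\<close>) are represented by the
  ascending list of exponents [e_1, ..., e_n] (smallest term first).
  Hardy hierarchy relative to g:
  \<open>g^0 = id\<close>, \<open>g^(\<alpha>+1)(x) = g^\<alpha>(g x)\<close>, \<open>g^(\<beta>+\<omega>^(k+1))(x) = g^(\<beta>+\<omega>^k\<cdot>(x+1))(x)\<close>.\<close>

function hardy :: "(nat \<Rightarrow> nat) \<Rightarrow> nat list \<Rightarrow> nat \<Rightarrow> nat" where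
  "hardy g [] x = x"
| "hardy g (0 # rs) x = hardy g rs (g x)"
| "hardy g (Suc k # rs) x = hardy g (replicate (Suc x) k @ rs) x"
  by pat_completeness auto
termination
proof (relation "inv_image {(M :: nat multiset, N). M < N} (\<lambda>(g, rs, x). mset rs)")
  show "wf (inv_image {(M :: nat multiset, N). M < N} (\<lambda>(g::nat\<Rightarrow>nat, rs::nat list, x::nat). mset rs))"
    by (rule wf_inv_image) (metis wfp_less_multiset[where 'a=nat, OF wfp_on_less] wfp_def)
next
  fix g :: "nat \<Rightarrow> nat" and rs x
  show "((g, rs, g x), g, 0 # rs, x) \<in> inv_image {(M :: nat multiset, N). M < N} (\<lambda>(g, rs, x). mset rs)"
    using subset_implies_multp[of "mset rs" "add_mset 0 (mset rs)" "(<)"]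
    by (simp add: less_multiset_def)
next
  fix g :: "nat \<Rightarrow> nat" and k rs x
  have "mset (replicate (Suc x) k) < {#Suc k#}"
    by (rule all_lt_Max_imp_lt_mset) auto
  then have "mset (replicate (Suc x) k) + mset rs < {#Suc k#} + mset rs"
    by simp
  then show "((g, replicate (Suc x) k @ rs, x), g, Suc k # rs, x)
      \<in> inv_image {(M :: nat multiset, N). M < N} (\<lambda>(g, rs, x). mset rs)"
    by simp
qed

definition hardy_omega_pow :: "(nat \<Rightarrow> nat) \<Rightarrow> nat \<Rightarrow> nat \<Rightarrow> nat" where
  "hardy_omega_pow g k = hardy g [k]"

end

theory Submission
  imports Defs
begin

text \<open>
  Order \<open>\<nat>\<^sup>d\<close> by the graded lexicographic order, a well-order compatible with addition.
  For a congruence \<open>Q\<close>, the vectors that are \<open>Q\<close>-congruent to a smaller vector form an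
  upward closed set \<open>reducible Q\<close>, monotone in \<open>Q\<close>. If \<open>(a, b) \<in> Q' - Q\<close> for \<open>Q \<subseteq> Q'\<close>,
  the least elements of the \<open>Q\<close>-classes of \<open>a\<close> and \<open>b\<close> are distinct and \<open>Q'\<close>-congruent,
  so the larger of the two lies in \<open>reducible Q' - reducible Q\<close> and has 1-norm at most
  \<open>max |a| |b|\<close>. A \<open>(g, n)\<close>-controlled chain of congruences therefore yields a bad sequence
  \<open>u\<^sub>0, u\<^sub>1, \<dots>\<close> in \<open>(\<nat>\<^sup>d, \<le>)\<close> (no \<open>u\<^sub>i \<le> u\<^sub>j\<close> for \<open>i < j\<close>) with
  \<open>|u\<^sub>i| \<le> d \<cdot> g\<^sup>i(n) \<le> g\<^sup>i(d n)\<close>, by super-homogeneity.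

  The length of such a sequence is bounded by covering its remaining elements with
  axis-parallel slices. The slice of dimension \<open>k\<close> containing the next element \<open>u\<^sub>i\<close> is
  replaced by at most \<open>|u\<^sub>i|\<close> slices of dimension \<open>k - 1\<close> covering its part not above \<open>u\<^sub>i\<close>.
  For the ordinal \<open>\<alpha>\<close> of the cover, the sum of \<open>\<omega>\<^sup>k\<close> over the dimensions \<open>k\<close> of its
  slices, this is one step down a fundamental sequence, paid for by one application of \<open>g\<close>
  to the argument of the Hardy function \<open>g\<^sup>\<alpha>\<close>. Starting from the single slice \<open>\<nat>\<^sup>d\<close>,
  the length is therefore at most \<open>g\<^sup>\<omega>\<^sup>d(d n)\<close>. For \<open>n = 0\<close> the first element is the zero vector, so the sequence has
  length at most 1.
\<close>

lemma hardy_append: "hardy g (xs @ ys) x = hardy g ys (hardy g xs x)"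
  by (induction g xs x rule: hardy.induct) simp_all

lemma hardy_Cons: "hardy g (k # xs) x = hardy g xs (hardy g [k] x)"
  using hardy_append[of g "[k]" xs x] by simp

lemma hardy_replicate: "hardy g (replicate c k) = hardy g [k] ^^ c"
proof (induction c)
  case (Suc c)
  show ?case
  proof
    fix x
    show "hardy g (replicate (Suc c) k) x = (hardy g [k] ^^ Suc c) x"
      using hardy_Cons[of g k "replicate c k" x] Suc by (simp add: funpow_Suc_right del: funpow.simps)
  qed
qed simp

lemma hardy_Suc_single: "hardy g [Suc k] x = (hardy g [k] ^^ Suc x) x"
  by (simp add: hardy_replicate del: replicate_Suc funpow.simps)

locale mono_inflationary =
  fixes g :: "nat \<Rightarrow> nat"
  assumes mono: "mono g" and inflationary: "x < g x"
begin

lemma le_funpow: "x \<le> (g ^^ i) x"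
  using funpow_mono2[OF mono, of 0 i x x] less_imp_le[OF inflationary] by simp

lemma mono_less_hardy_single: "mono (hardy g [k]) \<and> (\<forall>x. x < hardy g [k] x)"
proof (induction k)
  case 0
  then show ?case using mono inflationary by simp
next
  case (Suc k)
  then have mono_k: "mono (hardy g [k])" and gt_k: "x < hardy g [k] x" for x
    by auto
  have "hardy g [Suc k] x \<le> hardy g [Suc k] y" if "x \<le> y" for x y
    unfolding hardy_Suc_single
    by (rule funpow_mono2[OF mono_k]) (use that gt_k less_imp_le in auto)
  moreover have "x < hardy g [Suc k] x" for x
  proof -
    have "hardy g [k] x \<le> (hardy g [k] ^^ Suc x) x"
      using funpow_mono2[OF mono_k, of 1 "Suc x" x x] less_imp_le[OF gt_k] by simp
    then show ?thesis
      using gt_k[of x] by (simp only: hardy_Suc_single)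
  qed
  ultimately show ?case by (auto intro: monoI)
qed

lemma mono_hardy_single: "mono (hardy g [k])"
  using mono_less_hardy_single by blast

lemma less_hardy_single: "x < hardy g [k] x"
  using mono_less_hardy_single by blast

lemma hardy_single_mono_exponent:
  assumes "a \<le> b"
  shows "hardy g [a] x \<le> hardy g [b] x"
proof (rule lift_Suc_mono_le[of "\<lambda>k. hardy g [k] x", OF _ assms])
  fix k
  show "hardy g [k] x \<le> hardy g [Suc k] x"
    unfolding hardy_Suc_single
    using funpow_mono2[OF mono_hardy_single, of 1 "Suc x" x x] less_imp_le[OF less_hardy_single]
    by simp
qed

lemma mono_hardy: "mono (hardy g xs)"
proof (induction xs)
  case (Cons k xs)
  then show ?case
    using mono_hardy_single hardy_Cons[of g k xs] by (auto intro!: monoI simp: monoD)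
qed (simp add: mono_def)

lemma add_length_le_hardy: "x + length xs \<le> hardy g xs x"
proof (induction xs arbitrary: x)
  case (Cons k xs)
  show ?case
    using less_hardy_single[of x k] Cons.IH[of "hardy g [k] x"] hardy_Cons[of g k xs x] by simp
qed simp

lemma hardy_le_funpow:
  assumes "\<forall>a\<in>set xs. a \<le> j"
  shows "hardy g xs x \<le> (hardy g [j] ^^ length xs) x"
  using assms
proof (induction xs arbitrary: x)
  case (Cons a xs)
  have "hardy g (a # xs) x \<le> (hardy g [j] ^^ length xs) (hardy g [a] x)"
    using Cons hardy_Cons[of g a xs x] by simp
  also have "\<dots> \<le> (hardy g [j] ^^ length xs) (hardy g [j] x)"
    using Cons.prems by (intro funpow_mono mono_hardy_single hardy_single_mono_exponent) simp
  finally show ?case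
    by (simp add: funpow_Suc_right del: funpow.simps)
qed simp

text \<open>Replacing a term \<open>\<omega>\<^sup>j\<^sup>+\<^sup>1\<close> by \<open>c \<le> y\<close> copies of \<open>\<omega>\<^sup>j\<close> costs one application of \<open>g\<close>
  to the argument.\<close>
lemma hardy_replicate_le_Suc:
  assumes pre: "\<forall>a\<in>set pre. a \<le> j" and "c \<le> y"
  shows "hardy g (pre @ replicate c j @ post) (g y) \<le> hardy g (pre @ Suc j # post) y"
proof -
  let ?h = "hardy g [j]"
  define w where "w = hardy g pre y"
  have "hardy g pre (g y) \<le> (?h ^^ length pre) (g y)"
    using hardy_le_funpow[OF pre] .
  also have "\<dots> \<le> (?h ^^ length pre) (?h y)"
    using hardy_single_mono_exponent[of 0 j y] by (intro funpow_mono mono_hardy_single) simp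
  finally have "(?h ^^ c) (hardy g pre (g y)) \<le> (?h ^^ (c + Suc (length pre))) y"
    using funpow_mono[OF mono_hardy_single] by (simp add: funpow_add funpow_Suc_right del: funpow.simps)
  also have "\<dots> \<le> (?h ^^ Suc w) w"
  proof (rule funpow_mono2[OF mono_hardy_single])
    show "c + Suc (length pre) \<le> Suc w" "y \<le> w"
      using add_length_le_hardy[of y pre] \<open>c \<le> y\<close> by (simp_all add: w_def)
  qed (use less_imp_le[OF less_hardy_single] in auto)
  also have "\<dots> = hardy g [Suc j] w"
    by (simp only: hardy_Suc_single)
  finally have "hardy g post ((?h ^^ c) (hardy g pre (g y))) \<le> hardy g post (hardy g [Suc j] w)"
    by (rule monoD[OF mono_hardy])
  then show ?thesis
    by (simp only: hardy_append hardy_replicate hardy_Cons[of g "Suc j" post] w_def)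
qed

end

text \<open>\<open>hardy_mset g M = g\<^sup>\<alpha>\<close> for the ordinal \<open>\<alpha> = \<Sum>k\<in>#M. \<omega>\<^sup>k\<close>.\<close>
definition hardy_mset :: "(nat \<Rightarrow> nat) \<Rightarrow> nat multiset \<Rightarrow> nat \<Rightarrow> nat" where
  "hardy_mset g M = hardy g (sorted_list_of_multiset M)"

lemma sorted_list_of_multiset_eqI:
  "sorted xs \<Longrightarrow> mset xs = M \<Longrightarrow> sorted_list_of_multiset M = xs"
  by (metis sorted_list_of_multiset_mset sorted_sort_id)

lemma hardy_mset_single [simp]: "hardy_mset g {#k#} = hardy g [k]"
  by (simp add: hardy_mset_def)

lemma hardy_mset_add_zero: "hardy_mset g (add_mset 0 M) x = hardy_mset g M (g x)"
  by (simp add: hardy_mset_def insort_is_Cons)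

context mono_inflationary
begin

lemma le_hardy_mset: "x \<le> hardy_mset g M x"
  unfolding hardy_mset_def using add_length_le_hardy le_add1 order_trans by blast

lemma hardy_mset_replicate_le_Suc:
  assumes "c \<le> y"
  shows "hardy_mset g (M + replicate_mset c j) (g y) \<le> hardy_mset g (add_mset (Suc j) M) y"
proof -
  define pre where "pre = sorted_list_of_multiset {#a \<in># M. a \<le> j#}"
  define post where "post = sorted_list_of_multiset {#a \<in># M. \<not> a \<le> j#}"
  have pre: "sorted pre" "\<forall>a\<in>set pre. a \<le> j" and post: "sorted post" "\<forall>a\<in>set post. j < a"
    by (auto simp: pre_def post_def)
  have M: "mset pre + mset post = M"
    by (simp add: pre_def post_def flip: multiset_partition)
  have "sorted_list_of_multiset (M + replicate_mset c j) = pre @ replicate c j @ post"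
  proof (rule sorted_list_of_multiset_eqI)
    show "sorted (pre @ replicate c j @ post)"
      using pre post by (force simp: sorted_append)
    show "mset (pre @ replicate c j @ post) = M + replicate_mset c j"
      unfolding M[symmetric] by (simp add: ac_simps)
  qed
  moreover have "sorted_list_of_multiset (add_mset (Suc j) M) = pre @ Suc j # post"
  proof (rule sorted_list_of_multiset_eqI)
    show "sorted (pre @ Suc j # post)"
      using pre post by (force simp: sorted_append)
    show "mset (pre @ Suc j # post) = add_mset (Suc j) M"
      unfolding M[symmetric] by simp
  qed
  ultimately show ?thesis
    unfolding hardy_mset_def using hardy_replicate_le_Suc[OF pre(2) assms] by simp
qed

end

fun slice :: "nat \<Rightarrow> nat set \<times> nat list \<Rightarrow> nat list set" where
  "slice D (F, u) = {v. \<forall>p<D. p \<notin> F \<longrightarrow> v ! p = u ! p}"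

definition split_slice :: "nat list \<Rightarrow> nat set \<Rightarrow> (nat set \<times> nat list) multiset" where
  "split_slice v F = image_mset (\<lambda>(p, a). (F - {p}, v[p := a])) (mset_set (SIGMA p:F. {..<v ! p}))"

lemma size_split_slice_le:
  assumes "F \<subseteq> {..<length v}"
  shows "size (split_slice v F) \<le> sum_list v"
proof -
  have "size (split_slice v F) = (\<Sum>p\<in>F. v ! p)"
    using finite_subset[OF assms] by (simp add: split_slice_def)
  also have "\<dots> \<le> (\<Sum>p<length v. v ! p)"
    using assms by (intro sum_mono2) auto
  finally show ?thesis
    by (simp add: sum_list_sum_nth atLeast0LessThan)
qed

lemma free_split_slice: "s \<in># split_slice v F \<Longrightarrow> fst s \<subseteq> F"
  by (auto simp: split_slice_def)

lemma dims_split_slice: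
  assumes "finite F"
  shows "image_mset (card \<circ> fst) (split_slice v F) = replicate_mset (size (split_slice v F)) (card F - 1)"
proof -
  have "image_mset (card \<circ> fst) (split_slice v F) = image_mset (\<lambda>_. card F - 1) (split_slice v F)"
    using assms by (intro image_mset_cong) (auto simp: split_slice_def)
  then show ?thesis
    by (simp add: image_mset_const_eq)
qed

lemma not_above_in_split_slice:
  assumes "finite F" and "length v = D" and "length w = D"
    and "v \<in> slice D (F, u)" and "w \<in> slice D (F, u)" and "\<not> list_all2 (\<le>) v w"
  shows "\<exists>s\<in>#split_slice v F. w \<in> slice D s"
proof -
  obtain p where p: "p < D" "w ! p < v ! p"
    using assms(2,3,6) by (auto simp: list_all2_conv_all_nth not_le)
  then have "p \<in> F"
    using assms(4,5) by fastforce
  then have "(F - {p}, v[p := w ! p]) \<in># split_slice v F"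
    using assms(1) p by (force simp: split_slice_def)
  moreover have "w \<in> slice D (F - {p}, v[p := w ! p])"
    using assms(2,4,5) p \<open>p \<in> F\<close> by (auto simp: nth_list_update)
  ultimately show ?thesis ..
qed

lemma covered_after_split_slice:
  assumes "finite F" and "length v = D" and "v \<in> slice D (F, u)"
    and "t \<in># S" and "w \<in> slice D t" and "length w = D" and "\<not> list_all2 (\<le>) v w"
  shows "\<exists>s\<in>#S - {#(F, u)#} + split_slice v F. w \<in> slice D s"
proof (cases "t = (F, u)")
  case True
  then show ?thesis
    using not_above_in_split_slice[OF assms(1,2,6,3)] assms(5,7) by auto
next
  case False
  then show ?thesis
    using assms(4,5) by (auto simp: in_diff_count)
qed

lemma free_after_split_slice:
  assumes "\<forall>s\<in>#S. fst s \<subseteq> A" and "F \<subseteq> A"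
  shows "\<forall>s\<in>#S - {#(F, u)#} + split_slice v F. fst s \<subseteq> A"
  using assms free_split_slice by (fastforce dest: in_diffD)

context mono_inflationary
begin

lemma hardy_mset_split_slice:
  assumes "finite F" and "size (split_slice v F) \<le> y"
  shows "hardy_mset g (M + image_mset (card \<circ> fst) (split_slice v F)) (g y)
    \<le> hardy_mset g (add_mset (card F) M) y"
proof (cases "card F")
  case 0
  then have "split_slice v F = {#}"
    using assms(1) by (simp add: split_slice_def)
  then show ?thesis
    using 0 by (simp add: hardy_mset_add_zero)
next
  case (Suc j)
  then show ?thesis
    using hardy_mset_replicate_le_Suc[OF assms(2)] dims_split_slice[OF assms(1)] by simp
qed

lemma bad_sequence_slices:
  assumes "\<forall>j<l. length (v j) = D"
    and "\<forall>j<l. sum_list (v j) \<le> (g ^^ j) y"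
    and "\<forall>i j. i < j \<longrightarrow> j < l \<longrightarrow> \<not> list_all2 (\<le>) (v i) (v j)"
    and "\<forall>j<l. \<exists>s\<in>#S. v j \<in> slice D s"
    and "\<forall>s\<in>#S. fst s \<subseteq> {..<D}"
  shows "y + l \<le> hardy_mset g (image_mset (card \<circ> fst) S) y"
  using assms
proof (induction l arbitrary: v y S)
  case 0
  then show ?case using le_hardy_mset by simp
next
  case (Suc l)
  obtain F u where s: "(F, u) \<in># S" "v 0 \<in> slice D (F, u)"
    using Suc.prems(4) by force
  have F: "F \<subseteq> {..<D}" "finite F"
    using Suc.prems(5) s(1) finite_subset by fastforce+
  define S' where "S' = S - {#(F, u)#} + split_slice (v 0) F"
  have split_size: "size (split_slice (v 0) F) \<le> y"
    using size_split_slice_le[of F "v 0"] F Suc.prems(1,2) by force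
  have "g y + l \<le> hardy_mset g (image_mset (card \<circ> fst) S') (g y)"
  proof (rule Suc.IH)
    show "\<forall>j<l. length (v (Suc j)) = D"
      and "\<forall>i j. i < j \<longrightarrow> j < l \<longrightarrow> \<not> list_all2 (\<le>) (v (Suc i)) (v (Suc j))"
      using Suc.prems(1,3) by auto
    show "\<forall>j<l. sum_list (v (Suc j)) \<le> (g ^^ j) (g y)"
    proof (intro allI impI)
      fix j assume "j < l"
      then have "sum_list (v (Suc j)) \<le> (g ^^ Suc j) y"
        using Suc.prems(2) by blast
      then show "sum_list (v (Suc j)) \<le> (g ^^ j) (g y)"
        by (simp only: funpow_Suc_right o_apply)
    qed
    show "\<forall>t\<in>#S'. fst t \<subseteq> {..<D}"
      using free_after_split_slice[OF Suc.prems(5) F(1)] by (simp add: S'_def)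
    show "\<forall>j<l. \<exists>s\<in>#S'. v (Suc j) \<in> slice D s"
    proof (intro allI impI)
      fix j assume "j < l"
      then obtain t where t: "t \<in># S" "v (Suc j) \<in> slice D t"
        using Suc.prems(4) by blast
      have "length (v 0) = D" "length (v (Suc j)) = D" "\<not> list_all2 (\<le>) (v 0) (v (Suc j))"
        using Suc.prems(1,3) \<open>j < l\<close> by auto
      then show "\<exists>s\<in>#S'. v (Suc j) \<in> slice D s"
        unfolding S'_def using covered_after_split_slice[OF F(2) _ s(2) t] by blast
    qed
  qed
  also have "\<dots> \<le> hardy_mset g (add_mset (card F) (image_mset (card \<circ> fst) (S - {#(F, u)#}))) y"
    using hardy_mset_split_slice[OF F(2) split_size] by (simp add: S'_def)
  also have "add_mset (card F) (image_mset (card \<circ> fst) (S - {#(F, u)#})) = image_mset (card \<circ> fst) S"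
    using image_mset_add_mset[of "card \<circ> fst" "(F, u)" "S - {#(F, u)#}"] s(1) by simp
  finally show ?case
    using inflationary[of y] by linarith
qed

lemma bad_sequence_length:
  assumes "\<forall>j<l. length (v j) = D"
    and "\<forall>j<l. sum_list (v j) \<le> (g ^^ j) y"
    and "\<forall>i j. i < j \<longrightarrow> j < l \<longrightarrow> \<not> list_all2 (\<le>) (v i) (v j)"
  shows "y + l \<le> hardy g [D] y"
  using bad_sequence_slices[OF assms, of "{#({..<D}, replicate D 0)#}"] by simp

end

definition grlex :: "nat list \<Rightarrow> nat list \<Rightarrow> bool" where
  "grlex a b \<longleftrightarrow> sum_list a < sum_list b \<or> sum_list a = sum_list b \<and> (a, b) \<in> lexord less_than"

lemma grlex_irrefl: "\<not> grlex a a"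
  by (simp add: grlex_def lexord_irreflexive)

lemma grlex_trans: "grlex a b \<Longrightarrow> grlex b c \<Longrightarrow> grlex a c"
  unfolding grlex_def using lexord_trans trans_less_than by fastforce

lemma grlex_linear: "grlex a b \<or> a = b \<or> grlex b a"
  unfolding grlex_def using lexord_linear[of less_than a b] by fastforce

lemma sum_list_vadd:
  "length a = length c \<Longrightarrow> sum_list (vadd a c) = sum_list a + sum_list c"
  by (induction a c rule: list_induct2) (simp_all add: vadd_def)

lemma lexord_vadd:
  "length a = length b \<Longrightarrow> length b = length c \<Longrightarrow> (a, b) \<in> lexord less_than
    \<Longrightarrow> (vadd a c, vadd b c) \<in> lexord less_than"
proof (induction a b c rule: list_induct3)
  case (Cons x xs y ys z zs)
  then show ?case by (auto simp: vadd_def)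
qed simp

lemma grlex_vadd:
  "length a = length b \<Longrightarrow> length b = length c \<Longrightarrow> grlex a b \<Longrightarrow> grlex (vadd a c) (vadd b c)"
  unfolding grlex_def using lexord_vadd[of a b c] sum_list_vadd[of a c] sum_list_vadd[of b c] by auto

lemma grlex_minimal:
  assumes "a \<in> A" and "A \<subseteq> vecs d"
  obtains m where "m \<in> A" and "\<forall>b\<in>A. \<not> grlex b m"
proof -
  let ?R = "{(b, a). b \<in> vecs d \<and> a \<in> vecs d \<and> grlex b a}"
  have "wf ?R"
  proof (rule wf_finite_segments)
    show "irrefl ?R" "trans ?R"
      using grlex_irrefl grlex_trans by (auto simp: irrefl_def trans_def)
    fix a
    have "{b. (b, a) \<in> ?R} \<subseteq> {xs. set xs \<subseteq> {0..sum_list a} \<and> length xs = d}"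
      by (auto simp: grlex_def vecs_def dest!: member_le_sum_list)
    then show "finite {b. (b, a) \<in> ?R}"
      using finite_lists_length_eq[of "{0..sum_list a}" d] finite_subset by blast
  qed
  then obtain m where "m \<in> A" "\<And>b. (b, m) \<in> ?R \<Longrightarrow> b \<notin> A"
    using assms(1) by (rule wfE_min) blast
  then show ?thesis
    using that assms(2) by blast
qed

lemma congruence_subset: "congruence d Q \<Longrightarrow> Q \<subseteq> vecs d \<times> vecs d"
  unfolding congruence_def by (blast dest: equiv_type)

lemma congruence_refl: "congruence d Q \<Longrightarrow> a \<in> vecs d \<Longrightarrow> (a, a) \<in> Q"
  unfolding congruence_def equiv_def by (blast dest: refl_onD)

lemma congruence_sym: "congruence d Q \<Longrightarrow> (a, b) \<in> Q \<Longrightarrow> (b, a) \<in> Q"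
  unfolding congruence_def equiv_def by (blast dest: symD)

lemma congruence_trans: "congruence d Q \<Longrightarrow> (a, b) \<in> Q \<Longrightarrow> (b, c) \<in> Q \<Longrightarrow> (a, c) \<in> Q"
  unfolding congruence_def equiv_def by (blast dest: transD)

definition reducible :: "(nat list \<times> nat list) set \<Rightarrow> nat list set" where
  "reducible Q = {a. \<exists>b. (a, b) \<in> Q \<and> grlex b a}"

lemma reducible_mono: "Q \<subseteq> Q' \<Longrightarrow> reducible Q \<subseteq> reducible Q'"
  unfolding reducible_def by blast

lemma reducible_subset: "congruence d Q \<Longrightarrow> reducible Q \<subseteq> vecs d"
  using congruence_subset by (fastforce simp: reducible_def)

lemma reducible_vadd:
  assumes Q: "congruence d Q" and "a \<in> reducible Q" and "c \<in> vecs d"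
  shows "vadd a c \<in> reducible Q"
proof -
  obtain b where b: "(a, b) \<in> Q" "grlex b a"
    using assms(2) by (auto simp: reducible_def)
  have "length b = length a" "length a = length c"
    using b(1) congruence_subset[OF Q] assms(3) by (auto simp: vecs_def)
  then have "grlex (vadd b c) (vadd a c)"
    using grlex_vadd b(2) by blast
  moreover have "(vadd a c, vadd b c) \<in> Q"
    using Q b(1) assms(3) by (simp add: congruence_def)
  ultimately show ?thesis
    by (auto simp: reducible_def)
qed

lemma congruence_normal_form:
  assumes Q: "congruence d Q" and "a \<in> vecs d"
  obtains m where "(a, m) \<in> Q" and "m \<notin> reducible Q" and "sum_list m \<le> sum_list a"
proof -
  have "(a, a) \<in> Q"
    using congruence_refl[OF Q assms(2)] .
  obtain m where m: "m \<in> {b. (a, b) \<in> Q}" and min: "\<forall>b\<in>{b. (a, b) \<in> Q}. \<not> grlex b m"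
    by (rule grlex_minimal[of a "{b. (a, b) \<in> Q}" d])
      (use \<open>(a, a) \<in> Q\<close> congruence_subset[OF Q] in auto)
  have "m \<notin> reducible Q"
  proof
    assume "m \<in> reducible Q"
    then obtain b where "(m, b) \<in> Q" "grlex b m"
      by (auto simp: reducible_def)
    moreover have "(a, b) \<in> Q"
      using m \<open>(m, b) \<in> Q\<close> congruence_trans[OF Q] by blast
    ultimately show False
      using min by blast
  qed
  moreover have "sum_list m \<le> sum_list a"
    using min \<open>(a, a) \<in> Q\<close> by (auto simp: grlex_def)
  ultimately show ?thesis
    using that m by blast
qed

lemma reducible_strict_mono:
  assumes Q: "congruence d Q" and Q': "congruence d Q'" and "Q \<subseteq> Q'"
    and "(a, b) \<in> Q'" and "(a, b) \<notin> Q"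
  obtains u where "u \<in> reducible Q'" and "u \<notin> reducible Q"
    and "sum_list u \<le> max (sum_list a) (sum_list b)"
proof -
  have "a \<in> vecs d" "b \<in> vecs d"
    using congruence_subset[OF Q'] assms(4) by auto
  obtain ma where ma: "(a, ma) \<in> Q" "ma \<notin> reducible Q" "sum_list ma \<le> sum_list a"
    using congruence_normal_form[OF Q \<open>a \<in> vecs d\<close>] .
  obtain mb where mb: "(b, mb) \<in> Q" "mb \<notin> reducible Q" "sum_list mb \<le> sum_list b"
    using congruence_normal_form[OF Q \<open>b \<in> vecs d\<close>] .
  have "(ma, a) \<in> Q'"
    using congruence_sym[OF Q ma(1)] assms(3) by blast
  then have ma_mb: "(ma, mb) \<in> Q'"
    using congruence_trans[OF Q'] assms(3,4) mb(1) by blast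
  have "ma \<noteq> mb"
  proof
    assume "ma = mb"
    then have "(a, b) \<in> Q"
      using congruence_trans[OF Q ma(1)] congruence_sym[OF Q mb(1)] by simp
    then show False
      using assms(5) by contradiction
  qed
  then consider "grlex mb ma" | "grlex ma mb"
    using grlex_linear by blast
  then show ?thesis
  proof cases
    case 1
    then have "ma \<in> reducible Q'"
      using ma_mb by (auto simp: reducible_def)
    then show ?thesis
      using that ma by fastforce
  next
    case 2
    then have "mb \<in> reducible Q'"
      using congruence_sym[OF Q' ma_mb] by (auto simp: reducible_def)
    then show ?thesis
      using that mb by fastforce
  qed
qed

lemma vadd_diff: "list_all2 (\<le>) a b \<Longrightarrow> vadd a (map2 (-) b a) = b"
  by (induction a b rule: list_all2_induct) (simp_all add: vadd_def)

lemma reducible_chain_bad: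
  assumes cong: "congruence d (Q j)" and "Q (Suc i) \<subseteq> Q j"
    and "u i \<in> reducible (Q (Suc i))" and "u j \<notin> reducible (Q j)" and "length (u i) = d"
  shows "\<not> list_all2 (\<le>) (u i) (u j)"
proof
  assume le: "list_all2 (\<le>) (u i) (u j)"
  have "u i \<in> reducible (Q j)"
    using reducible_mono[OF assms(2)] assms(3) by blast
  moreover have "map2 (-) (u j) (u i) \<in> vecs d"
    using assms(5) list_all2_lengthD[OF le] by (simp add: vecs_def)
  ultimately have "vadd (u i) (map2 (-) (u j) (u i)) \<in> reducible (Q j)"
    by (rule reducible_vadd[OF cong])
  then show False
    using assms(4) vadd_diff[OF le] by simp
qed

lemma member_le_vnorm: "x \<in> set v \<Longrightarrow> x \<le> vnorm v"
  by (induction v) (auto simp: vnorm_def)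

lemma vnorm_append: "vnorm (a @ b) = max (vnorm a) (vnorm b)"
  by (induction a) (simp_all add: vnorm_def max.assoc)

lemma sum_list_le_vnorm: "sum_list v \<le> length v * vnorm v"
proof -
  have "sum_list v = (\<Sum>x\<leftarrow>v. x)"
    by simp
  also have "\<dots> \<le> (\<Sum>x\<leftarrow>v. vnorm v)"
    by (rule sum_list_mono) (rule member_le_vnorm)
  finally show ?thesis
    by (simp add: sum_list_triv)
qed

lemma sum_list_le_pnorm:
  "sum_list a \<le> length a * pnorm (a, b)" "sum_list b \<le> length b * pnorm (a, b)"
  using sum_list_le_vnorm[of a] sum_list_le_vnorm[of b]
  by (auto simp: pnorm_def vnorm_append intro: order_trans)

lemma controlled_chain_mono:
  assumes "controlled_chain g n nrm S l" and "i \<le> j" and "j \<le> l"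
  shows "S i \<subseteq> S j"
  using assms(2,3)
proof (induction j rule: dec_induct)
  case (step k)
  then have "k < l"
    by simp
  then have "S k \<subseteq> S (Suc k)"
    using assms(1) unfolding controlled_chain_def by blast
  then show ?case
    using step by simp
qed simp

lemma controlled_congruence_chain_step:
  assumes cong: "\<forall>i\<le>l. congruence d (Q i)" and chain: "controlled_chain g n pnorm Q l"
    and "i < l"
  obtains u where "u \<in> reducible (Q (Suc i))" and "u \<notin> reducible (Q i)"
    and "sum_list u \<le> d * (g ^^ i) n"
proof -
  obtain s where "s \<in> Q (Suc i) - Q i" "pnorm s \<le> (g ^^ i) n"
    using chain \<open>i < l\<close> unfolding controlled_chain_def by blast
  then obtain a b where ab: "(a, b) \<in> Q (Suc i)" "(a, b) \<notin> Q i" "pnorm (a, b) \<le> (g ^^ i) n"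
    by (cases s) auto
  have cong_i: "congruence d (Q i)" "congruence d (Q (Suc i))"
    using cong \<open>i < l\<close> by simp_all
  have "length a = d" "length b = d"
    using congruence_subset[OF cong_i(2)] ab(1) by (auto simp: vecs_def)
  then have "max (sum_list a) (sum_list b) \<le> d * (g ^^ i) n"
    using sum_list_le_pnorm[where a = a and b = b] ab(3) by (auto intro: order_trans mult_le_mono2)
  moreover have "Q i \<subseteq> Q (Suc i)"
    using controlled_chain_mono[OF chain, of i "Suc i"] \<open>i < l\<close> by simp
  then obtain u where "u \<in> reducible (Q (Suc i))" "u \<notin> reducible (Q i)"
    "sum_list u \<le> max (sum_list a) (sum_list b)"
    by (rule reducible_strict_mono[OF cong_i _ ab(1,2)])
  ultimately show ?thesis
    using that by force
qed

lemma controlled_congruence_chain_bad_sequence: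
  assumes cong: "\<forall>i\<le>l. congruence d (Q i)" and chain: "controlled_chain g n pnorm Q l"
  obtains u where "\<forall>i<l. length (u i) = d" and "\<forall>i<l. sum_list (u i) \<le> d * (g ^^ i) n"
    and "\<forall>i j. i < j \<longrightarrow> j < l \<longrightarrow> \<not> list_all2 (\<le>) (u i) (u j)"
proof -
  have "\<exists>u. u \<in> reducible (Q (Suc i)) \<and> u \<notin> reducible (Q i) \<and> sum_list u \<le> d * (g ^^ i) n"
    if "i < l" for i
    using controlled_congruence_chain_step[OF cong chain that] by blast
  then obtain u where u: "\<forall>i<l. u i \<in> reducible (Q (Suc i)) \<and> u i \<notin> reducible (Q i)
      \<and> sum_list (u i) \<le> d * (g ^^ i) n"
    by metis
  have len: "\<forall>i<l. length (u i) = d"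
  proof (intro allI impI)
    fix i assume "i < l"
    then have "reducible (Q (Suc i)) \<subseteq> vecs d"
      using reducible_subset cong by simp
    then show "length (u i) = d"
      using u \<open>i < l\<close> by (auto simp: vecs_def)
  qed
  have "\<not> list_all2 (\<le>) (u i) (u j)" if "i < j" "j < l" for i j
    using reducible_chain_bad[of d Q j i u] controlled_chain_mono[OF chain, of "Suc i" j] cong u len that
    by simp
  then show ?thesis
    using that len u by blast
qed

context mono_inflationary
begin

lemma funpow_superhomogeneous:
  assumes superhom: "\<forall>x y. x \<ge> 1 \<longrightarrow> y \<ge> 1 \<longrightarrow> g (x * y) \<ge> g x * y" and "n \<ge> 1"
  shows "d * (g ^^ i) n \<le> (g ^^ i) (d * n)"
proof (cases "d = 0")
  case False
  show ?thesis
  proof (induction i)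
    case (Suc i)
    have "1 \<le> (g ^^ i) n"
      using le_funpow[of n i] assms(2) by linarith
    then have "d * g ((g ^^ i) n) \<le> g ((g ^^ i) n * d)"
      using superhom[rule_format, of "(g ^^ i) n" d] False by (simp add: mult.commute)
    also have "\<dots> \<le> g ((g ^^ i) (d * n))"
      using Suc.IH by (simp add: monoD[OF mono] mult.commute)
    finally show ?case
      by simp
  qed simp
qed simp

end

theorem lemma15:
  fixes g :: "nat \<Rightarrow> nat" and n d l :: nat
    and Q :: "nat \<Rightarrow> (nat list \<times> nat list) set"
  assumes "mono g"
    and "\<forall>x. g x > x"
    and "\<forall>x y. x \<ge> 1 \<longrightarrow> y \<ge> 1 \<longrightarrow> g (x * y) \<ge> g x * y"
    and "\<forall>i\<le>l. congruence d (Q i)"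
    and "controlled_chain g n pnorm Q l"
  shows "l \<le> 1 + hardy_omega_pow g (4 * d) (4 * d * n)"
proof -
  interpret mono_inflationary g
    using assms(1,2) by unfold_locales auto
  obtain u where len: "\<forall>i<l. length (u i) = d" and sum: "\<forall>i<l. sum_list (u i) \<le> d * (g ^^ i) n"
    and bad: "\<forall>i j. i < j \<longrightarrow> j < l \<longrightarrow> \<not> list_all2 (\<le>) (u i) (u j)"
    using controlled_congruence_chain_bad_sequence[OF assms(4,5)] .
  show ?thesis
  proof (cases "n = 0")
    case True
    have "l \<le> 1"
    proof (rule ccontr)
      assume "\<not> l \<le> 1"
      then have "u 0 = replicate d 0"
        using sum[rule_format, of 0] len True by (simp add: replicate_eqI)
      then have "list_all2 (\<le>) (u 0) (u 1)"
        using len \<open>\<not> l \<le> 1\<close> by (simp add: list_all2_conv_all_nth)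
      then show False
        using bad \<open>\<not> l \<le> 1\<close> by auto
    qed
    then show ?thesis
      by simp
  next
    case False
    then have "\<forall>i<l. sum_list (u i) \<le> (g ^^ i) (d * n)"
      using sum funpow_superhomogeneous[OF assms(3), of n d] by (auto intro: order_trans)
    then have "d * n + l \<le> hardy g [d] (d * n)"
      by (rule bad_sequence_length[OF len _ bad])
    also have "\<dots> \<le> hardy g [4 * d] (4 * d * n)"
      using hardy_single_mono_exponent[of d "4 * d" "4 * d * n"]
        monoD[OF mono_hardy_single, of "d * n" "4 * d * n" d]
      by simp
    finally show ?thesis
      by (simp add: hardy_omega_pow_def)
  qed
qed

end
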